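(* Let $\mathcal E$ be an exact category. The assignments $\mathcal S\mapsto \mathsf M_{\mathcal S}:=\{[X]\in\mathsf M(\mathcal E)\mid X\in\mathcal S\}$ and $F\mapsto \mathcal D_F:=\{X\in\mathcal E\mid [X]\in F\}$ are mutually inverse inclusion-preserving bijections between $\operatorname{Serre}(\mathcal E)$ and $\operatorname{Face}(\mathsf M(\mathcal E))$, and $F\mapsto \mathsf M(\mathcal E)\setminus F$ is an inclusion-reversing bijection from $\operatorname{Face}(\mathsf M(\mathcal E))$ to $\operatorname{MSpec}\mathsf M(\mathcal E)$. Hence there are bijections between $\operatorname{Serre}(\mathcal E)$, $\operatorname{Face}(\mathsf M(\mathcal E))$ and $\operatorname{MSpec}\mathsf M(\mathcal E)$.
   Context: All categories are skeletally small and subcategories are full and closed under isomorphisms; $|\mathcal C|$ is the set of isomorphism classes of objects. An exact category $\mathcal E$ is an additive full subcategory of an abelian category $\mathcal A$ closed under extensions; a conflation in $\mathcal E$ is a short exact sequence $0\to X\to Y\to Z\to0$ in $\mathcal A$ with $X,Y,Z\in\mathcal E$. Monoids are commutative, written additively. The Grothendieck monoid $\mathsf M(\mathcal E)$ is a monoid with a map $|\mathcal E|\to\mathsf M(\mathcal E)$, $X\mapsto[X]$, with $[0]=0$ and $[Y]=[X]+[Z]$ for every conflation, universal among such maps to monoids. A Serre subcategory of $\mathcal E$ is an additive subcategory $\mathcal S$ such that for every conflation $0\to X\to Y\to Z\to0$, $Y\in\mathcal S$ iff $X,Z\in\mathcal S$; $\operatorname{Serre}(\mathcal E)$ is the set of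 these. A face of a monoid $M$ is a submonoid $F$ with $x+y\in F$ iff $x\in F$ and $y\in F$; $\operatorname{Face}(M)$ is the set of faces. A prime ideal of $M$ is a subset $\mathfrak p\ne M$ with $x+a\in\mathfrak p$ whenever $x\in\mathfrak p$, $a\in M$, and such that $x+y\in\mathfrak p$ implies $x\in\mathfrak p$ or $y\in\mathfrak p$; $\operatorname{MSpec}M$ is the set of prime ideals. *)

theory Defs
  imports Main "HOL-Library.Multiset"
begin

record ('o, 'm) acat =
  Ob    :: "'o set"
  Ar    :: "'m set"
  dom   :: "'m \<Rightarrow> 'o"
  cod   :: "'m \<Rightarrow> 'o"
  cmp   :: "'m \<Rightarrow> 'm \<Rightarrow> 'm"   (* cmp C g f = g o f *)
  idt   :: "'o \<Rightarrow> 'm"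
  madd  :: "'m \<Rightarrow> 'm \<Rightarrow> 'm"
  mzero :: "'o \<Rightarrow> 'o \<Rightarrow> 'm"

definition hom :: "('o,'m) acat \<Rightarrow> 'o \<Rightarrow> 'o \<Rightarrow> 'm set" where
  "hom C X Y = {f \<in> Ar C. dom C f = X \<and> cod C f = Y}"

definition category :: "('o,'m) acat \<Rightarrow> bool" where
  "category C \<longleftrightarrow>
     (\<forall>f\<in>Ar C. dom C f \<in> Ob C \<and> cod C f \<in> Ob C) \<and>
     (\<forall>X\<in>Ob C. idt C X \<in> hom C X X) \<and>
     (\<forall>f\<in>Ar C. \<forall>g\<in>Ar C. cod C f = dom C g \<longrightarrow> cmp C g f \<in> hom C (dom C f) (cod C g)) \<and>
     (\<forall>f\<in>Ar C. cmp C f (idt C (dom C f)) = f \<and> cmp C (idt C (cod C f)) f = f) \<and>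
     (\<forall>f\<in>Ar C. \<forall>g\<in>Ar C. \<forall>h\<in>Ar C. cod C f = dom C g \<and> cod C g = dom C h \<longrightarrow>
        cmp C h (cmp C g f) = cmp C (cmp C h g) f)"

definition preadditive :: "('o,'m) acat \<Rightarrow> bool" where
  "preadditive C \<longleftrightarrow> category C \<and>
     (\<forall>X\<in>Ob C. \<forall>Y\<in>Ob C.
        mzero C X Y \<in> hom C X Y \<and>
        (\<forall>f\<in>hom C X Y. \<forall>g\<in>hom C X Y. madd C f g \<in> hom C X Y \<and> madd C f g = madd C g f) \<and>
        (\<forall>f\<in>hom C X Y. \<forall>g\<in>hom C X Y. \<forall>h\<in>hom C X Y.
            madd C (madd C f g) h = madd C f (madd C g h)) \<and>
        (\<forall>f\<in>hom C X Y. madd C f (mzero C X Y) = f) \<and>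
        (\<forall>f\<in>hom C X Y. \<exists>g\<in>hom C X Y. madd C f g = mzero C X Y)) \<and>
     (\<forall>X\<in>Ob C. \<forall>Y\<in>Ob C. \<forall>Z\<in>Ob C.
        (\<forall>f\<in>hom C X Y. \<forall>f'\<in>hom C X Y. \<forall>g\<in>hom C Y Z.
            cmp C g (madd C f f') = madd C (cmp C g f) (cmp C g f')) \<and>
        (\<forall>f\<in>hom C X Y. \<forall>g\<in>hom C Y Z. \<forall>g'\<in>hom C Y Z.
            cmp C (madd C g g') f = madd C (cmp C g f) (cmp C g' f)))"

definition zero_object :: "('o,'m) acat \<Rightarrow> 'o \<Rightarrow> bool" where
  "zero_object C Z \<longleftrightarrow> Z \<in> Ob C \<and> idt C Z = mzero C Z Z"

definition is_biproduct ::
  "('o,'m) acat \<Rightarrow> 'o \<Rightarrow> 'o \<Rightarrow> 'o \<Rightarrow> 'm \<Rightarrow> 'm \<Rightarrow> 'm \<Rightarrow> 'm \<Rightarrow> bool" where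
  "is_biproduct C X Y P i1 i2 p1 p2 \<longleftrightarrow>
     P \<in> Ob C \<and> i1 \<in> hom C X P \<and> i2 \<in> hom C Y P \<and> p1 \<in> hom C P X \<and> p2 \<in> hom C P Y \<and>
     cmp C p1 i1 = idt C X \<and> cmp C p2 i2 = idt C Y \<and>
     cmp C p2 i1 = mzero C X Y \<and> cmp C p1 i2 = mzero C Y X \<and>
     madd C (cmp C i1 p1) (cmp C i2 p2) = idt C P"

definition is_kernel :: "('o,'m) acat \<Rightarrow> 'm \<Rightarrow> 'm \<Rightarrow> bool" where
  "is_kernel C k f \<longleftrightarrow> k \<in> Ar C \<and> f \<in> Ar C \<and> cod C k = dom C f \<and>
     cmp C f k = mzero C (dom C k) (cod C f) \<and>
     (\<forall>g\<in>Ar C. cod C g = dom C f \<and> cmp C f g = mzero C (dom C g) (cod C f) \<longrightarrow>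
        (\<exists>!h. h \<in> hom C (dom C g) (dom C k) \<and> cmp C k h = g))"

definition is_cokernel :: "('o,'m) acat \<Rightarrow> 'm \<Rightarrow> 'm \<Rightarrow> bool" where
  "is_cokernel C c f \<longleftrightarrow> c \<in> Ar C \<and> f \<in> Ar C \<and> dom C c = cod C f \<and>
     cmp C c f = mzero C (dom C f) (cod C c) \<and>
     (\<forall>g\<in>Ar C. dom C g = cod C f \<and> cmp C g f = mzero C (dom C f) (cod C g) \<longrightarrow>
        (\<exists>!h. h \<in> hom C (cod C c) (cod C g) \<and> cmp C h c = g))"

definition mono :: "('o,'m) acat \<Rightarrow> 'm \<Rightarrow> bool" where
  "mono C f \<longleftrightarrow> f \<in> Ar C \<and> (\<forall>g\<in>Ar C. \<forall>h\<in>Ar C.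
     cod C g = dom C f \<and> cod C h = dom C f \<and> dom C g = dom C h \<and> cmp C f g = cmp C f h \<longrightarrow> g = h)"

definition epi :: "('o,'m) acat \<Rightarrow> 'm \<Rightarrow> bool" where
  "epi C f \<longleftrightarrow> f \<in> Ar C \<and> (\<forall>g\<in>Ar C. \<forall>h\<in>Ar C.
     dom C g = cod C f \<and> dom C h = cod C f \<and> cod C g = cod C h \<and> cmp C g f = cmp C h f \<longrightarrow> g = h)"

definition abelian :: "('o,'m) acat \<Rightarrow> bool" where
  "abelian C \<longleftrightarrow> preadditive C \<and>
     (\<exists>Z. zero_object C Z) \<and>
     (\<forall>X\<in>Ob C. \<forall>Y\<in>Ob C. \<exists>P i1 i2 p1 p2. is_biproduct C X Y P i1 i2 p1 p2) \<and>
     (\<forall>f\<in>Ar C. \<exists>k. is_kernel C k f) \<and>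
     (\<forall>f\<in>Ar C. \<exists>c. is_cokernel C c f) \<and>
     (\<forall>f. mono C f \<longrightarrow> (\<exists>g. is_kernel C f g)) \<and>
     (\<forall>f. epi C f \<longrightarrow> (\<exists>g. is_cokernel C f g))"

definition isomorphic :: "('o,'m) acat \<Rightarrow> 'o \<Rightarrow> 'o \<Rightarrow> bool" where
  "isomorphic C X Y \<longleftrightarrow> (\<exists>f\<in>hom C X Y. \<exists>g\<in>hom C Y X. cmp C g f = idt C X \<and> cmp C f g = idt C Y)"

definition short_exact :: "('o,'m) acat \<Rightarrow> 'o \<Rightarrow> 'o \<Rightarrow> 'o \<Rightarrow> bool" where
  "short_exact C X Y Z \<longleftrightarrow>
     (\<exists>f g. f \<in> hom C X Y \<and> g \<in> hom C Y Z \<and> is_kernel C f g \<and> is_cokernel C g f)"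

section \<open>Subcategories (full, closed under isomorphisms; given by object sets)\<close>

definition iso_closed :: "('o,'m) acat \<Rightarrow> 'o set \<Rightarrow> bool" where
  "iso_closed C S \<longleftrightarrow> (\<forall>X\<in>S. \<forall>Y. isomorphic C X Y \<longrightarrow> Y \<in> S)"

definition additive_subcat :: "('o,'m) acat \<Rightarrow> 'o set \<Rightarrow> bool" where
  "additive_subcat C S \<longleftrightarrow> S \<subseteq> Ob C \<and> iso_closed C S \<and>
     (\<exists>Z\<in>S. zero_object C Z) \<and>
     (\<forall>X\<in>S. \<forall>Y\<in>S. \<forall>P i1 i2 p1 p2. is_biproduct C X Y P i1 i2 p1 p2 \<longrightarrow> P \<in> S)"

text \<open>Exact category: additive full subcategory of an abelian category closed under extensions.\<close>
definition exact_subcat :: "('o,'m) acat \<Rightarrow> 'o set \<Rightarrow> bool" where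
  "exact_subcat C E \<longleftrightarrow> additive_subcat C E \<and>
     (\<forall>X Y Z. X \<in> E \<and> Z \<in> E \<and> short_exact C X Y Z \<longrightarrow> Y \<in> E)"

definition conflation :: "('o,'m) acat \<Rightarrow> 'o set \<Rightarrow> 'o \<Rightarrow> 'o \<Rightarrow> 'o \<Rightarrow> bool" where
  "conflation C E X Y Z \<longleftrightarrow> X \<in> E \<and> Y \<in> E \<and> Z \<in> E \<and> short_exact C X Y Z"

definition serre_subcat :: "('o,'m) acat \<Rightarrow> 'o set \<Rightarrow> 'o set \<Rightarrow> bool" where
  "serre_subcat C E S \<longleftrightarrow> S \<subseteq> E \<and> additive_subcat C S \<and>
     (\<forall>X Y Z. conflation C E X Y Z \<longrightarrow> (Y \<in> S \<longleftrightarrow> X \<in> S \<and> Z \<in> S))"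

definition Serre :: "('o,'m) acat \<Rightarrow> 'o set \<Rightarrow> 'o set set" where
  "Serre C E = {S. serre_subcat C E S}"

section \<open>Grothendieck monoid (standard construction: free commutative monoid on
  objects modulo the congruence generated by [0] = 0 and [Y] = [X] + [Z])\<close>

inductive_set gcong :: "('o,'m) acat \<Rightarrow> 'o set \<Rightarrow> ('o multiset \<times> 'o multiset) set"
  for C E where
  refl:  "set_mset a \<subseteq> E \<Longrightarrow> (a, a) \<in> gcong C E"
| sym:   "(a, b) \<in> gcong C E \<Longrightarrow> (b, a) \<in> gcong C E"
| trans: "(a, b) \<in> gcong C E \<Longrightarrow> (b, c) \<in> gcong C E \<Longrightarrow> (a, c) \<in> gcong C E"
| add:   "(a, b) \<in> gcong C E \<Longrightarrow> set_mset c \<subseteq> E \<Longrightarrow> (a + c, b + c) \<in> gcong C E"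
| zero:  "Z \<in> E \<Longrightarrow> zero_object C Z \<Longrightarrow> ({#Z#}, {#}) \<in> gcong C E"
| conf:  "conflation C E X Y Z \<Longrightarrow> ({#Y#}, {#X, Z#}) \<in> gcong C E"

definition GM_car :: "('o,'m) acat \<Rightarrow> 'o set \<Rightarrow> 'o multiset set set" where
  "GM_car C E = {gcong C E `` {a} | a. set_mset a \<subseteq> E}"

definition GM_add :: "('o,'m) acat \<Rightarrow> 'o set \<Rightarrow> 'o multiset set \<Rightarrow> 'o multiset set \<Rightarrow> 'o multiset set" where
  "GM_add C E u v = {c. \<exists>a\<in>u. \<exists>b\<in>v. (a + b, c) \<in> gcong C E}"

definition GM_zero :: "('o,'m) acat \<Rightarrow> 'o set \<Rightarrow> 'o multiset set" where
  "GM_zero C E = gcong C E `` {{#}}"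

definition gcls :: "('o,'m) acat \<Rightarrow> 'o set \<Rightarrow> 'o \<Rightarrow> 'o multiset set" where
  "gcls C E X = gcong C E `` {{#X#}}"

definition is_face :: "'a set \<Rightarrow> ('a \<Rightarrow> 'a \<Rightarrow> 'a) \<Rightarrow> 'a \<Rightarrow> 'a set \<Rightarrow> bool" where
  "is_face M pl z F \<longleftrightarrow> F \<subseteq> M \<and> z \<in> F \<and>
     (\<forall>x\<in>M. \<forall>y\<in>M. pl x y \<in> F \<longleftrightarrow> x \<in> F \<and> y \<in> F)"

definition is_prime_ideal :: "'a set \<Rightarrow> ('a \<Rightarrow> 'a \<Rightarrow> 'a) \<Rightarrow> 'a set \<Rightarrow> bool" where
  "is_prime_ideal M pl p \<longleftrightarrow> p \<subseteq> M \<and> p \<noteq> M \<and>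
     (\<forall>x\<in>p. \<forall>a\<in>M. pl x a \<in> p) \<and>
     (\<forall>x\<in>M. \<forall>y\<in>M. pl x y \<in> p \<longrightarrow> x \<in> p \<or> y \<in> p)"

definition Face_GM :: "('o,'m) acat \<Rightarrow> 'o set \<Rightarrow> 'o multiset set set set" where
  "Face_GM C E = {F. is_face (GM_car C E) (GM_add C E) (GM_zero C E) F}"

definition MSpec_GM :: "('o,'m) acat \<Rightarrow> 'o set \<Rightarrow> 'o multiset set set set" where
  "MSpec_GM C E = {p. is_prime_ideal (GM_car C E) (GM_add C E) p}"

definition M_of :: "('o,'m) acat \<Rightarrow> 'o set \<Rightarrow> 'o set \<Rightarrow> 'o multiset set set" where
  "M_of C E S = gcls C E ` S"

definition D_of :: "('o,'m) acat \<Rightarrow> 'o set \<Rightarrow> 'o multiset set set \<Rightarrow> 'o set" where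
  "D_of C E F = {X \<in> E. gcls C E X \<in> F}"

end

theory Submission
  imports Defs
begin

(*
  Every element of M(E) is the class [X] of a single object, because [X] + [Y] = [X \<oplus> Y]
  and the split sequence 0 \<rightarrow> X \<rightarrow> X \<oplus> Y \<rightarrow> Y \<rightarrow> 0 is a conflation. For a Serre
  subcategory S the property "every summand of a formal sum lies in S" is invariant under
  each generating relation of the congruence defining M(E) (for conflations this is exactly
  the Serre condition), so X \<in> S depends only on [X]; hence D(M_S) = S, and M_S is a face
  since [X] + [Y] = [X \<oplus> Y]. Conversely, [Y] = [X] + [Z] for every conflation turns the
  face condition on F into the Serre condition on D_F. Finally, in any commutative monoid
  complementation exchanges faces and prime ideals.
*)

locale preadditive_cat =
  fixes C :: "('o, 'm) acat"
  assumes preadditive: "preadditive C"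
begin

lemma is_category: "category C"
  using preadditive unfolding preadditive_def by blast

lemma hom_ObD: "f \<in> hom C X Y \<Longrightarrow> X \<in> Ob C \<and> Y \<in> Ob C \<and> f \<in> Ar C"
  using is_category unfolding category_def hom_def by blast

lemma idt_in_hom: "X \<in> Ob C \<Longrightarrow> idt C X \<in> hom C X X"
  using is_category unfolding category_def by blast

lemma comp_in_hom: "f \<in> hom C X Y \<Longrightarrow> g \<in> hom C Y Z \<Longrightarrow> cmp C g f \<in> hom C X Z"
  using is_category unfolding category_def hom_def by (metis (mono_tags, lifting) mem_Collect_eq)

lemma comp_idt_right: "f \<in> hom C X Y \<Longrightarrow> cmp C f (idt C X) = f"
  using is_category unfolding category_def hom_def by blast

lemma comp_idt_left: "f \<in> hom C X Y \<Longrightarrow> cmp C (idt C Y) f = f"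
  using is_category unfolding category_def hom_def by blast

lemma comp_assoc:
  "f \<in> hom C X Y \<Longrightarrow> g \<in> hom C Y Z \<Longrightarrow> h \<in> hom C Z W \<Longrightarrow>
   cmp C h (cmp C g f) = cmp C (cmp C h g) f"
  using is_category unfolding category_def hom_def by (metis (mono_tags, lifting) mem_Collect_eq)

lemma mzero_in_hom: "X \<in> Ob C \<Longrightarrow> Y \<in> Ob C \<Longrightarrow> mzero C X Y \<in> hom C X Y"
  using preadditive unfolding preadditive_def by blast

lemma madd_commute: "f \<in> hom C X Y \<Longrightarrow> g \<in> hom C X Y \<Longrightarrow> madd C f g = madd C g f"
  using preadditive hom_ObD unfolding preadditive_def by blast

lemma madd_assoc:
  "f \<in> hom C X Y \<Longrightarrow> g \<in> hom C X Y \<Longrightarrow> h \<in> hom C X Y \<Longrightarrow>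
   madd C (madd C f g) h = madd C f (madd C g h)"
  using preadditive hom_ObD unfolding preadditive_def by blast

lemma madd_mzero_right: "f \<in> hom C X Y \<Longrightarrow> madd C f (mzero C X Y) = f"
  using preadditive hom_ObD unfolding preadditive_def by blast

lemma madd_mzero_left: "f \<in> hom C X Y \<Longrightarrow> madd C (mzero C X Y) f = f"
  using madd_mzero_right madd_commute mzero_in_hom hom_ObD by metis

lemma madd_inverse_ex: "f \<in> hom C X Y \<Longrightarrow> \<exists>g\<in>hom C X Y. madd C f g = mzero C X Y"
  using preadditive hom_ObD unfolding preadditive_def by blast

lemma comp_madd_left:
  "f \<in> hom C X Y \<Longrightarrow> f' \<in> hom C X Y \<Longrightarrow> g \<in> hom C Y Z \<Longrightarrow>
   cmp C g (madd C f f') = madd C (cmp C g f) (cmp C g f')"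
  using preadditive hom_ObD unfolding preadditive_def by blast

lemma comp_madd_right:
  "f \<in> hom C X Y \<Longrightarrow> g \<in> hom C Y Z \<Longrightarrow> g' \<in> hom C Y Z \<Longrightarrow>
   cmp C (madd C g g') f = madd C (cmp C g f) (cmp C g' f)"
  using preadditive hom_ObD unfolding preadditive_def by blast

lemma madd_idem_imp_mzero:
  assumes h: "h \<in> hom C X Y" and idem: "madd C h h = h"
  shows "h = mzero C X Y"
proof -
  obtain k where k: "k \<in> hom C X Y" "madd C h k = mzero C X Y"
    using madd_inverse_ex[OF h] by blast
  have "mzero C X Y = madd C (madd C h h) k" using k idem by simp
  also have "\<dots> = madd C h (madd C h k)" using madd_assoc h k by blast
  also have "\<dots> = h" using k madd_mzero_right h by simp
  finally show ?thesis by simp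
qed

lemma comp_mzero_right:
  assumes g: "g \<in> hom C Y Z" and X: "X \<in> Ob C"
  shows "cmp C g (mzero C X Y) = mzero C X Z"
proof -
  have z: "mzero C X Y \<in> hom C X Y" using mzero_in_hom X hom_ObD[OF g] by blast
  have "madd C (cmp C g (mzero C X Y)) (cmp C g (mzero C X Y)) = cmp C g (mzero C X Y)"
    using comp_madd_left[OF z z g] madd_mzero_right[OF z] by simp
  then show ?thesis using madd_idem_imp_mzero comp_in_hom[OF z g] by blast
qed

lemma comp_mzero_left:
  assumes f: "f \<in> hom C X Y" and Z: "Z \<in> Ob C"
  shows "cmp C (mzero C Y Z) f = mzero C X Z"
proof -
  have z: "mzero C Y Z \<in> hom C Y Z" using mzero_in_hom Z hom_ObD[OF f] by blast
  have "madd C (cmp C (mzero C Y Z) f) (cmp C (mzero C Y Z) f) = cmp C (mzero C Y Z) f"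
    using comp_madd_right[OF f z z] madd_mzero_right[OF z] by simp
  then show ?thesis using madd_idem_imp_mzero comp_in_hom[OF f z] by blast
qed

lemma zero_objects_isomorphic:
  assumes Z: "zero_object C Z" and Z': "zero_object C Z'"
  shows "isomorphic C Z Z'"
proof -
  have Ob: "Z \<in> Ob C" "Z' \<in> Ob C" using Z Z' unfolding zero_object_def by auto
  have "cmp C (mzero C Z' Z) (mzero C Z Z') = idt C Z" "cmp C (mzero C Z Z') (mzero C Z' Z) = idt C Z'"
    using comp_mzero_left mzero_in_hom Ob Z Z' unfolding zero_object_def by auto
  then show ?thesis using mzero_in_hom Ob unfolding isomorphic_def by blast
qed

context
  fixes X Y P i1 i2 p1 p2
  assumes biprod: "is_biproduct C X Y P i1 i2 p1 p2"
begin

lemma biproduct_in_hom: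
  "i1 \<in> hom C X P" "i2 \<in> hom C Y P" "p1 \<in> hom C P X" "p2 \<in> hom C P Y"
  using biprod unfolding is_biproduct_def by auto

lemma biproduct_equations:
  "cmp C p1 i1 = idt C X" "cmp C p2 i2 = idt C Y"
  "cmp C p2 i1 = mzero C X Y" "cmp C p1 i2 = mzero C Y X"
  "madd C (cmp C i1 p1) (cmp C i2 p2) = idt C P"
  using biprod unfolding is_biproduct_def by auto

lemma biproduct_decompose_right:
  assumes h: "h \<in> hom C W P"
  shows "h = madd C (cmp C i1 (cmp C p1 h)) (cmp C i2 (cmp C p2 h))"
proof -
  note maps = biproduct_in_hom
  have "h = cmp C (madd C (cmp C i1 p1) (cmp C i2 p2)) h"
    using biproduct_equations comp_idt_left[OF h] by simp
  also have "\<dots> = madd C (cmp C (cmp C i1 p1) h) (cmp C (cmp C i2 p2) h)"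
    using comp_madd_right[OF h] comp_in_hom maps by blast
  finally show ?thesis using comp_assoc[OF h] maps by simp
qed

lemma biproduct_decompose_left:
  assumes h: "h \<in> hom C P W"
  shows "h = madd C (cmp C (cmp C h i1) p1) (cmp C (cmp C h i2) p2)"
proof -
  note maps = biproduct_in_hom
  have "h = cmp C h (madd C (cmp C i1 p1) (cmp C i2 p2))"
    using biproduct_equations comp_idt_right[OF h] by simp
  also have "\<dots> = madd C (cmp C h (cmp C i1 p1)) (cmp C h (cmp C i2 p2))"
    using comp_madd_left[OF _ _ h] comp_in_hom maps by blast
  finally show ?thesis using comp_assoc[OF _ _ h] maps by simp
qed

lemma biproduct_kernel: "is_kernel C i1 p2"
  unfolding is_kernel_def
proof (intro conjI ballI impI)
  note maps = biproduct_in_hom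
  show "i1 \<in> Ar C" "p2 \<in> Ar C" using maps hom_ObD by blast+
  show "cod C i1 = dom C p2" "cmp C p2 i1 = mzero C (dom C i1) (cod C p2)"
    using maps biproduct_equations by (simp_all add: hom_def)
  fix h assume "h \<in> Ar C" and "cod C h = dom C p2 \<and> cmp C p2 h = mzero C (dom C h) (cod C p2)"
  then have h: "h \<in> hom C (dom C h) P" and p2h: "cmp C p2 h = mzero C (dom C h) Y"
    using maps unfolding hom_def by auto
  have "cmp C i2 (cmp C p2 h) = mzero C (dom C h) P"
    using p2h comp_mzero_right maps hom_ObD[OF h] by simp
  with biproduct_decompose_right[OF h]
  have "h = madd C (cmp C i1 (cmp C p1 h)) (mzero C (dom C h) P)" by simp
  then have factor: "cmp C i1 (cmp C p1 h) = h"
    using madd_mzero_right comp_in_hom[OF comp_in_hom[OF h]] maps by metis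
  show "\<exists>!k. k \<in> hom C (dom C h) (dom C i1) \<and> cmp C i1 k = h"
  proof (rule ex1I[of _ "cmp C p1 h"])
    show "cmp C p1 h \<in> hom C (dom C h) (dom C i1) \<and> cmp C i1 (cmp C p1 h) = h"
      using comp_in_hom[OF h] factor maps unfolding hom_def by auto
  next
    fix k assume k: "k \<in> hom C (dom C h) (dom C i1) \<and> cmp C i1 k = h"
    then have k_hom: "k \<in> hom C (dom C h) X" using maps unfolding hom_def by auto
    have "cmp C p1 h = cmp C (cmp C p1 i1) k" using k comp_assoc[OF k_hom biproduct_in_hom(1,3)] by simp
    also have "\<dots> = k" using biproduct_equations comp_idt_left[OF k_hom] by simp
    finally show "k = cmp C p1 h" by simp
  qed
qed

lemma biproduct_cokernel: "is_cokernel C p2 i1"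
  unfolding is_cokernel_def
proof (intro conjI ballI impI)
  note maps = biproduct_in_hom
  show "p2 \<in> Ar C" "i1 \<in> Ar C" using maps hom_ObD by blast+
  show "dom C p2 = cod C i1" "cmp C p2 i1 = mzero C (dom C i1) (cod C p2)"
    using maps biproduct_equations by (simp_all add: hom_def)
  fix h assume "h \<in> Ar C" and "dom C h = cod C i1 \<and> cmp C h i1 = mzero C (dom C i1) (cod C h)"
  then have h: "h \<in> hom C P (cod C h)" and hi1: "cmp C h i1 = mzero C X (cod C h)"
    using maps unfolding hom_def by auto
  have "cmp C (cmp C h i1) p1 = mzero C P (cod C h)"
    using hi1 comp_mzero_left maps hom_ObD[OF h] by simp
  with biproduct_decompose_left[OF h]
  have "h = madd C (mzero C P (cod C h)) (cmp C (cmp C h i2) p2)" by simp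
  then have factor: "cmp C (cmp C h i2) p2 = h"
    using madd_mzero_left comp_in_hom[OF _ comp_in_hom[OF _ h]] maps by metis
  show "\<exists>!k. k \<in> hom C (cod C p2) (cod C h) \<and> cmp C k p2 = h"
  proof (rule ex1I[of _ "cmp C h i2"])
    show "cmp C h i2 \<in> hom C (cod C p2) (cod C h) \<and> cmp C (cmp C h i2) p2 = h"
      using comp_in_hom[OF _ h] factor maps unfolding hom_def by auto
  next
    fix k assume k: "k \<in> hom C (cod C p2) (cod C h) \<and> cmp C k p2 = h"
    then have k_hom: "k \<in> hom C Y (cod C h)" using maps unfolding hom_def by auto
    have "cmp C h i2 = cmp C k (cmp C p2 i2)" using k comp_assoc[OF biproduct_in_hom(2,4) k_hom] by simp
    also have "\<dots> = k" using biproduct_equations comp_idt_right[OF k_hom] by simp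
    finally show "k = cmp C h i2" by simp
  qed
qed

lemma biproduct_short_exact: "short_exact C X P Y"
  using biproduct_in_hom biproduct_kernel biproduct_cokernel unfolding short_exact_def by blast

end

lemma isomorphic_biproduct_zero_object:
  assumes iso: "isomorphic C X Y" and Z: "zero_object C Z"
  shows "\<exists>i1 i2 p1 p2. is_biproduct C X Z Y i1 i2 p1 p2"
proof -
  obtain f g where f: "f \<in> hom C X Y" and g: "g \<in> hom C Y X"
    and "cmp C g f = idt C X" "cmp C f g = idt C Y"
    using iso unfolding isomorphic_def by blast
  moreover have "X \<in> Ob C" "Y \<in> Ob C" "Z \<in> Ob C"
    using f hom_ObD Z unfolding zero_object_def by auto
  ultimately have "is_biproduct C X Z Y f (mzero C Z Y) g (mzero C Y Z)"
    using mzero_in_hom comp_mzero_left[OF mzero_in_hom[of Z Y]] comp_mzero_right[OF g]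
      comp_mzero_left[OF f] Z madd_mzero_right[OF idt_in_hom[of Y]]
      comp_mzero_left[OF mzero_in_hom[of Y Z], of Y]
    unfolding is_biproduct_def zero_object_def by auto
  then show ?thesis by blast
qed

end

lemma gcong_set_mset_subset: "(a, b) \<in> gcong C E \<Longrightarrow> set_mset a \<subseteq> E \<and> set_mset b \<subseteq> E"
  by (induction rule: gcong.induct) (auto simp: conflation_def)

lemma gcong_add_both:
  assumes "(a, a') \<in> gcong C E" and "(b, b') \<in> gcong C E"
  shows "(a + b, a' + b') \<in> gcong C E"
proof -
  have "(a + b, a' + b) \<in> gcong C E"
    using gcong.add[OF assms(1)] gcong_set_mset_subset[OF assms(2)] by blast
  moreover have "(b + a', b' + a') \<in> gcong C E"
    using gcong.add[OF assms(2)] gcong_set_mset_subset[OF assms(1)] by blast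
  then have "(a' + b, a' + b') \<in> gcong C E" by (simp add: add.commute)
  ultimately show ?thesis by (rule gcong.trans)
qed

lemma Image_gcong_eq_iff:
  assumes "set_mset b \<subseteq> E"
  shows "gcong C E `` {a} = gcong C E `` {b} \<longleftrightarrow> (a, b) \<in> gcong C E"
proof
  assume "gcong C E `` {a} = gcong C E `` {b}"
  moreover have "b \<in> gcong C E `` {b}" using gcong.refl[OF assms] by blast
  ultimately show "(a, b) \<in> gcong C E" by blast
next
  assume "(a, b) \<in> gcong C E"
  then show "gcong C E `` {a} = gcong C E `` {b}" using gcong.trans gcong.sym by blast
qed

lemma GM_add_Image_gcong:
  assumes "set_mset a \<subseteq> E" and "set_mset b \<subseteq> E"
  shows "GM_add C E (gcong C E `` {a}) (gcong C E `` {b}) = gcong C E `` {a + b}"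
proof
  show "GM_add C E (gcong C E `` {a}) (gcong C E `` {b}) \<subseteq> gcong C E `` {a + b}"
    unfolding GM_add_def using gcong_add_both gcong.trans by blast
  show "gcong C E `` {a + b} \<subseteq> GM_add C E (gcong C E `` {a}) (gcong C E `` {b})"
    unfolding GM_add_def using gcong.refl assms by blast
qed

lemma gcls_conflation:
  assumes "conflation C E X Y Z"
  shows "gcls C E Y = GM_add C E (gcls C E X) (gcls C E Z)"
proof -
  have E: "X \<in> E" "Y \<in> E" "Z \<in> E" using assms unfolding conflation_def by auto
  have "({#Y#}, {#X#} + {#Z#}) \<in> gcong C E" using gcong.conf[OF assms] by (simp add: add_mset_commute)
  then have "gcong C E `` {{#Y#}} = gcong C E `` {{#X#} + {#Z#}}"
    using Image_gcong_eq_iff[of "{#X#} + {#Z#}" E C "{#Y#}"] E by simp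
  then show ?thesis using GM_add_Image_gcong[of "{#X#}" E "{#Z#}" C] E unfolding gcls_def by simp
qed

lemma gcls_zero_object:
  assumes "Z \<in> E" and "zero_object C Z"
  shows "gcls C E Z = GM_zero C E"
  using Image_gcong_eq_iff[of "{#}" E C "{#Z#}"] gcong.zero[OF assms]
  unfolding gcls_def GM_zero_def by simp

context preadditive_cat
begin

lemma serre_subcat_zero_object:
  assumes S: "serre_subcat C E S" and Z: "zero_object C Z"
  shows "Z \<in> S"
proof -
  obtain Z0 where "Z0 \<in> S" "zero_object C Z0"
    using S unfolding serre_subcat_def additive_subcat_def by blast
  moreover have "iso_closed C S" using S unfolding serre_subcat_def additive_subcat_def by blast
  ultimately show ?thesis using zero_objects_isomorphic Z unfolding iso_closed_def by blast
qed

lemma gcong_serre_subcat_iff: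
  assumes "serre_subcat C E S"
  shows "(a, b) \<in> gcong C E \<Longrightarrow> set_mset a \<subseteq> S \<longleftrightarrow> set_mset b \<subseteq> S"
proof (induction rule: gcong.induct)
  case (zero Z)
  then show ?case using serre_subcat_zero_object[OF assms] by simp
next
  case (conf X Y Z)
  then show ?case using assms unfolding serre_subcat_def by simp
qed auto

lemma serre_subcat_gcls_eq:
  assumes "serre_subcat C E S" and "Y \<in> E" and "gcls C E X = gcls C E Y"
  shows "X \<in> S \<longleftrightarrow> Y \<in> S"
  using assms gcong_serre_subcat_iff[of E S "{#X#}" "{#Y#}"] Image_gcong_eq_iff[of "{#Y#}" E C]
  unfolding gcls_def by simp

end


lemma face_complement_prime_ideal:
  assumes closed: "\<And>x y. x \<in> M \<Longrightarrow> y \<in> M \<Longrightarrow> pl x y \<in> M"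
    and face: "is_face M pl z F"
  shows "is_prime_ideal M pl (M - F)"
  using face closed unfolding is_face_def is_prime_ideal_def by blast

lemma prime_ideal_complement_face:
  assumes closed: "\<And>x y. x \<in> M \<Longrightarrow> y \<in> M \<Longrightarrow> pl x y \<in> M"
    and commute: "\<And>x y. x \<in> M \<Longrightarrow> y \<in> M \<Longrightarrow> pl x y = pl y x"
    and zero: "z \<in> M" "\<And>x. x \<in> M \<Longrightarrow> pl z x = x"
    and prime: "is_prime_ideal M pl p"
  shows "is_face M pl z (M - p)"
proof -
  have ideal: "\<And>x a. x \<in> p \<Longrightarrow> a \<in> M \<Longrightarrow> pl x a \<in> p"
    and pM: "p \<subseteq> M" "p \<noteq> M"
    and split: "\<And>x y. x \<in> M \<Longrightarrow> y \<in> M \<Longrightarrow> pl x y \<in> p \<Longrightarrow> x \<in> p \<or> y \<in> p"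
    using prime unfolding is_prime_ideal_def by auto
  have "z \<notin> p"
  proof
    assume "z \<in> p"
    then have "x \<in> p" if "x \<in> M" for x using ideal[of z x] zero(2)[OF that] that by simp
    then show False using pM by blast
  qed
  moreover have "pl x y \<in> p \<longleftrightarrow> x \<in> p \<or> y \<in> p" if x: "x \<in> M" and y: "y \<in> M" for x y
    using split[OF x y] ideal[of x y] ideal[of y x] commute[OF x y] x y by auto
  ultimately show ?thesis
    unfolding is_face_def using zero(1) closed by auto
qed

lemma bij_betw_face_prime_ideal:
  assumes closed: "\<And>x y. x \<in> M \<Longrightarrow> y \<in> M \<Longrightarrow> pl x y \<in> M"
    and commute: "\<And>x y. x \<in> M \<Longrightarrow> y \<in> M \<Longrightarrow> pl x y = pl y x"
    and zero: "z \<in> M" "\<And>x. x \<in> M \<Longrightarrow> pl z x = x"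
  shows "bij_betw (\<lambda>F. M - F) {F. is_face M pl z F} {p. is_prime_ideal M pl p}"
proof (rule bij_betw_byWitness[where f' = "\<lambda>p. M - p"])
  show "\<forall>F\<in>{F. is_face M pl z F}. M - (M - F) = F"
    unfolding is_face_def by blast
  show "\<forall>p\<in>{p. is_prime_ideal M pl p}. M - (M - p) = p"
    unfolding is_prime_ideal_def by blast
  show "(\<lambda>F. M - F) ` {F. is_face M pl z F} \<subseteq> {p. is_prime_ideal M pl p}"
    using face_complement_prime_ideal[of M pl] closed by blast
  show "(\<lambda>p. M - p) ` {p. is_prime_ideal M pl p} \<subseteq> {F. is_face M pl z F}"
    using prime_ideal_complement_face[of M pl z] closed commute zero by blast
qed

lemma subset_iff_if_retraction:
  assumes "\<And>X Y. X \<subseteq> Y \<Longrightarrow> f X \<subseteq> f Y" and "\<And>X Y. X \<subseteq> Y \<Longrightarrow> g X \<subseteq> g Y"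
    and "g (f A) = A" and "g (f B) = B"
  shows "f A \<subseteq> f B \<longleftrightarrow> A \<subseteq> B"
  using assms by metis


locale exact_setting =
  fixes C :: "('o, 'm) acat" and E :: "'o set"
  assumes abelian: "abelian C" and exact: "exact_subcat C E"

sublocale exact_setting \<subseteq> preadditive_cat C
  using abelian unfolding abelian_def by unfold_locales blast

context exact_setting
begin

lemma E_subset_Ob: "E \<subseteq> Ob C"
  using exact unfolding exact_subcat_def additive_subcat_def by blast

lemma zero_object_in_E: obtains Z where "Z \<in> E" "zero_object C Z"
  using exact unfolding exact_subcat_def additive_subcat_def by blast

lemma biproduct_conflation:
  assumes "X \<in> E" "Y \<in> E" and "is_biproduct C X Y P i1 i2 p1 p2"
  shows "conflation C E X P Y"
proof -
  have "\<forall>X\<in>E. \<forall>Y\<in>E. \<forall>P i1 i2 p1 p2. is_biproduct C X Y P i1 i2 p1 p2 \<longrightarrow> P \<in> E"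
    using exact unfolding exact_subcat_def additive_subcat_def by (elim conjE)
  then show ?thesis using assms biproduct_short_exact unfolding conflation_def by blast
qed

lemma conflation_exists:
  assumes "X \<in> E" "Y \<in> E"
  obtains P where "conflation C E X P Y"
proof -
  have "\<forall>X\<in>Ob C. \<forall>Y\<in>Ob C. \<exists>P i1 i2 p1 p2. is_biproduct C X Y P i1 i2 p1 p2"
    using abelian unfolding abelian_def by (elim conjE)
  then obtain P i1 i2 p1 p2 where "is_biproduct C X Y P i1 i2 p1 p2"
    using assms E_subset_Ob by blast
  then show ?thesis using that biproduct_conflation assms by blast
qed

lemma gcong_singleton_ex: "set_mset a \<subseteq> E \<Longrightarrow> \<exists>X\<in>E. (a, {#X#}) \<in> gcong C E"
proof (induction a)
  case empty
  obtain Z where "Z \<in> E" "zero_object C Z" using zero_object_in_E .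
  moreover from calculation have "({#}, {#Z#}) \<in> gcong C E" by (rule gcong.sym[OF gcong.zero])
  ultimately show ?case by blast
next
  case (add x a)
  then have x: "x \<in> E" and "set_mset a \<subseteq> E" by auto
  then obtain W where W: "W \<in> E" "(a, {#W#}) \<in> gcong C E" using add.IH by blast
  obtain P where P: "conflation C E W P x" using conflation_exists W(1) x .
  have "(a + {#x#}, {#W#} + {#x#}) \<in> gcong C E" by (rule gcong.add[OF W(2)]) (use x in simp)
  moreover have "({#W#} + {#x#}, {#P#}) \<in> gcong C E"
    using gcong.sym[OF gcong.conf[OF P]] by (simp add: add_mset_commute)
  ultimately have "(add_mset x a, {#P#}) \<in> gcong C E" using gcong.trans by (metis add_mset_add_single)
  moreover have "P \<in> E" using P unfolding conflation_def by blast
  ultimately show ?case by blast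
qed

lemma GM_car_eq: "GM_car C E = gcls C E ` E"
proof
  show "GM_car C E \<subseteq> gcls C E ` E"
  proof
    fix u assume "u \<in> GM_car C E"
    then obtain a where a: "set_mset a \<subseteq> E" "u = gcong C E `` {a}" unfolding GM_car_def by blast
    then obtain X where "X \<in> E" "(a, {#X#}) \<in> gcong C E" using gcong_singleton_ex by blast
    then show "u \<in> gcls C E ` E" using a Image_gcong_eq_iff[of "{#X#}" E C a] unfolding gcls_def by auto
  qed
  show "gcls C E ` E \<subseteq> GM_car C E"
    unfolding GM_car_def gcls_def by force
qed

lemma gcls_in_GM_car: "X \<in> E \<Longrightarrow> gcls C E X \<in> GM_car C E"
  by (simp add: GM_car_eq)

lemma GM_zero_in_car: "GM_zero C E \<in> GM_car C E"
proof -
  obtain Z where "Z \<in> E" "zero_object C Z" using zero_object_in_E .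
  then show ?thesis using gcls_zero_object gcls_in_GM_car by metis
qed

lemma GM_add_gcls_conflation:
  assumes "X \<in> E" "Y \<in> E"
  obtains P where "conflation C E X P Y" "GM_add C E (gcls C E X) (gcls C E Y) = gcls C E P"
proof -
  obtain P where P: "conflation C E X P Y" using conflation_exists[OF assms] .
  then show ?thesis using that gcls_conflation[OF P] by simp
qed

lemma GM_add_closed:
  assumes "u \<in> GM_car C E" "v \<in> GM_car C E"
  shows "GM_add C E u v \<in> GM_car C E"
proof -
  obtain X Y where "X \<in> E" "Y \<in> E" "u = gcls C E X" "v = gcls C E Y"
    using assms unfolding GM_car_eq by blast
  moreover obtain P where "conflation C E X P Y" "GM_add C E (gcls C E X) (gcls C E Y) = gcls C E P"
    using GM_add_gcls_conflation calculation(1,2) .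
  ultimately show ?thesis using gcls_in_GM_car unfolding conflation_def by simp
qed

lemma GM_add_commute:
  assumes "u \<in> GM_car C E" "v \<in> GM_car C E"
  shows "GM_add C E u v = GM_add C E v u"
proof -
  obtain X Y where "X \<in> E" "Y \<in> E" "u = gcls C E X" "v = gcls C E Y"
    using assms unfolding GM_car_eq by blast
  then show ?thesis
    using GM_add_Image_gcong[of "{#X#}" E "{#Y#}" C] GM_add_Image_gcong[of "{#Y#}" E "{#X#}" C]
    unfolding gcls_def by (simp add: add_mset_commute)
qed

lemma GM_add_zero_left:
  assumes "u \<in> GM_car C E"
  shows "GM_add C E (GM_zero C E) u = u"
proof -
  obtain X where "X \<in> E" "u = gcls C E X" using assms unfolding GM_car_eq by blast
  then show ?thesis using GM_add_Image_gcong[of "{#}" E "{#X#}" C] unfolding gcls_def GM_zero_def by simp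
qed

lemma isomorphic_gcls_eq:
  assumes X: "X \<in> E" and iso: "isomorphic C X Y"
  shows "Y \<in> E \<and> gcls C E Y = gcls C E X"
proof -
  obtain Z where Z: "Z \<in> E" "zero_object C Z" using zero_object_in_E .
  obtain i1 i2 p1 p2 where "is_biproduct C X Z Y i1 i2 p1 p2"
    using isomorphic_biproduct_zero_object[OF iso Z(2)] by blast
  then have conf: "conflation C E X Y Z" using biproduct_conflation X Z(1) by blast
  have "gcls C E Y = GM_add C E (gcls C E X) (GM_zero C E)"
    using gcls_conflation[OF conf] gcls_zero_object[OF Z] by simp
  also have "\<dots> = gcls C E X"
    using GM_add_commute[OF gcls_in_GM_car[OF X] GM_zero_in_car] GM_add_zero_left[OF gcls_in_GM_car[OF X]]
    by simp
  finally show ?thesis using conf unfolding conflation_def by simp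
qed

lemma gcls_in_M_of_iff:
  assumes S: "serre_subcat C E S" and X: "X \<in> E"
  shows "gcls C E X \<in> M_of C E S \<longleftrightarrow> X \<in> S"
proof
  assume "gcls C E X \<in> M_of C E S"
  then obtain Y where "Y \<in> S" "gcls C E X = gcls C E Y" unfolding M_of_def by blast
  moreover have "S \<subseteq> E" using S unfolding serre_subcat_def by blast
  ultimately show "X \<in> S" using serre_subcat_gcls_eq[OF S] by blast
qed (simp add: M_of_def)

lemma M_of_face:
  assumes S: "serre_subcat C E S"
  shows "is_face (GM_car C E) (GM_add C E) (GM_zero C E) (M_of C E S)"
  unfolding is_face_def
proof (intro conjI ballI)
  have SE: "S \<subseteq> E" using S unfolding serre_subcat_def by blast
  then show "M_of C E S \<subseteq> GM_car C E" unfolding M_of_def GM_car_eq by blast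
  obtain Z where "Z \<in> S" "zero_object C Z"
    using S unfolding serre_subcat_def additive_subcat_def by blast
  then show "GM_zero C E \<in> M_of C E S"
    using gcls_zero_object SE unfolding M_of_def by (metis image_eqI subsetD)
  fix u v assume "u \<in> GM_car C E" "v \<in> GM_car C E"
  then obtain X Y where X: "X \<in> E" "u = gcls C E X" and Y: "Y \<in> E" "v = gcls C E Y"
    unfolding GM_car_eq by blast
  obtain P where P: "conflation C E X P Y" and uv: "GM_add C E u v = gcls C E P"
    using GM_add_gcls_conflation[OF X(1) Y(1)] X Y by blast
  have "GM_add C E u v \<in> M_of C E S \<longleftrightarrow> P \<in> S"
    using uv gcls_in_M_of_iff[OF S] P unfolding conflation_def by simp
  also have "\<dots> \<longleftrightarrow> X \<in> S \<and> Y \<in> S" using S P unfolding serre_subcat_def by blast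
  also have "\<dots> \<longleftrightarrow> u \<in> M_of C E S \<and> v \<in> M_of C E S" using gcls_in_M_of_iff[OF S] X Y by simp
  finally show "GM_add C E u v \<in> M_of C E S \<longleftrightarrow> u \<in> M_of C E S \<and> v \<in> M_of C E S" .
qed

lemma D_of_serre:
  assumes F: "is_face (GM_car C E) (GM_add C E) (GM_zero C E) F"
  shows "serre_subcat C E (D_of C E F)"
proof -
  have zero: "GM_zero C E \<in> F"
    and face: "\<And>u v. u \<in> GM_car C E \<Longrightarrow> v \<in> GM_car C E \<Longrightarrow>
      GM_add C E u v \<in> F \<longleftrightarrow> u \<in> F \<and> v \<in> F"
    using F unfolding is_face_def by auto
  have conf: "Y \<in> D_of C E F \<longleftrightarrow> X \<in> D_of C E F \<and> Z \<in> D_of C E F"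
    if c: "conflation C E X Y Z" for X Y Z
    using c gcls_conflation[OF c] face[OF gcls_in_GM_car gcls_in_GM_car]
    unfolding D_of_def conflation_def by auto
  have "additive_subcat C (D_of C E F)"
    unfolding additive_subcat_def
  proof (intro conjI ballI allI impI)
    show "D_of C E F \<subseteq> Ob C" using E_subset_Ob unfolding D_of_def by blast
    show "iso_closed C (D_of C E F)"
      unfolding iso_closed_def D_of_def using isomorphic_gcls_eq by auto
    obtain Z where Z: "Z \<in> E" "zero_object C Z" using zero_object_in_E .
    then show "\<exists>Z\<in>D_of C E F. zero_object C Z"
      using gcls_zero_object[OF Z] zero unfolding D_of_def by auto
  next
    fix X Y P i1 i2 p1 p2
    assume "X \<in> D_of C E F" "Y \<in> D_of C E F" "is_biproduct C X Y P i1 i2 p1 p2"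
    then show "P \<in> D_of C E F" using conf biproduct_conflation unfolding D_of_def by blast
  qed
  then show ?thesis using conf unfolding serre_subcat_def D_of_def by auto
qed

lemma D_of_M_of: "serre_subcat C E S \<Longrightarrow> D_of C E (M_of C E S) = S"
  using gcls_in_M_of_iff unfolding D_of_def serre_subcat_def by blast

lemma M_of_D_of:
  assumes "is_face (GM_car C E) (GM_add C E) (GM_zero C E) F"
  shows "M_of C E (D_of C E F) = F"
proof -
  have "F \<subseteq> gcls C E ` E" using assms unfolding is_face_def GM_car_eq by blast
  then show ?thesis unfolding M_of_def D_of_def by blast
qed

end


theorem mainTheorem2:
  fixes C :: "('o, 'm) acat" and E :: "'o set"
  assumes "abelian C" and "exact_subcat C E"
  shows "bij_betw (M_of C E) (Serre C E) (Face_GM C E)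
    \<and> (\<forall>S\<in>Serre C E. D_of C E (M_of C E S) = S)
    \<and> (\<forall>F\<in>Face_GM C E. D_of C E F \<in> Serre C E \<and> M_of C E (D_of C E F) = F)
    \<and> (\<forall>S\<in>Serre C E. \<forall>S'\<in>Serre C E. S \<subseteq> S' \<longleftrightarrow> M_of C E S \<subseteq> M_of C E S')
    \<and> (\<forall>F\<in>Face_GM C E. \<forall>G\<in>Face_GM C E. F \<subseteq> G \<longleftrightarrow> D_of C E F \<subseteq> D_of C E G)
    \<and> bij_betw (\<lambda>F. GM_car C E - F) (Face_GM C E) (MSpec_GM C E)
    \<and> (\<forall>F\<in>Face_GM C E. \<forall>G\<in>Face_GM C E. F \<subseteq> G \<longleftrightarrow> GM_car C E - G \<subseteq> GM_car C E - F)
    \<and> bij_betw (\<lambda>S. GM_car C E - M_of C E S) (Serre C E) (MSpec_GM C E)"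
proof -
  interpret exact_setting C E using assms by unfold_locales
  have DM: "\<forall>S\<in>Serre C E. D_of C E (M_of C E S) = S"
    using D_of_M_of unfolding Serre_def by blast
  have MD: "\<forall>F\<in>Face_GM C E. D_of C E F \<in> Serre C E \<and> M_of C E (D_of C E F) = F"
    using D_of_serre M_of_D_of unfolding Serre_def Face_GM_def by blast
  have bij_M: "bij_betw (M_of C E) (Serre C E) (Face_GM C E)"
    by (rule bij_betw_byWitness[where f' = "D_of C E"])
      (use DM MD M_of_face in \<open>auto simp: Serre_def Face_GM_def\<close>)
  have bij_complement: "bij_betw (\<lambda>F. GM_car C E - F) (Face_GM C E) (MSpec_GM C E)"
    unfolding Face_GM_def MSpec_GM_def
    by (rule bij_betw_face_prime_ideal)
      (use GM_add_closed GM_add_commute GM_zero_in_car GM_add_zero_left in auto)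
  have mono_M: "S \<subseteq> S' \<Longrightarrow> M_of C E S \<subseteq> M_of C E S'" for S S'
    unfolding M_of_def by blast
  have mono_D: "F \<subseteq> G \<Longrightarrow> D_of C E F \<subseteq> D_of C E G" for F G
    unfolding D_of_def by blast
  have "\<forall>F\<in>Face_GM C E. F \<subseteq> GM_car C E"
    unfolding Face_GM_def is_face_def by blast
  then have "\<forall>F\<in>Face_GM C E. \<forall>G\<in>Face_GM C E. F \<subseteq> G \<longleftrightarrow> GM_car C E - G \<subseteq> GM_car C E - F"
    by blast
  then show ?thesis
    using bij_M DM MD bij_complement bij_betw_trans[OF bij_M bij_complement]
      subset_iff_if_retraction[of "M_of C E" "D_of C E", OF mono_M mono_D]
      subset_iff_if_retraction[of "D_of C E" "M_of C E", OF mono_D mono_M]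
    by (auto simp: comp_def)
qed

end
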